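(* Let $G$ be a finite group acting on a complex abelian variety $A$, and let $H\le G$. Let $H_1,\dots,H_s$ be the double cosets of $H$ in $G$, and $q_i:=\frac1{|H|}\sum_{y\in H_i}y$. Let $V$ be an irreducible complex representation of $G$ with $\dim V^H=1$ and $\chi_V$ rational-valued, with associated irreducible rational representation $W$. Then $\chi_V(q_i)\in\mathbb{Z}$ for all $i$, and $$q_i(z)=\chi_V(q_i)\,z\quad\text{for all } z\in A_{H,\widetilde W}\text{ and all } i=1,\dots,s.$$
   Context: The action of $G$ on $A$ induces an algebra homomorphism $\mathbb{Q}[G]\to\mathrm{End}_{\mathbb Q}(A)$. Elements of $\mathbb{Q}[G]$ are identified with their images. Set $p_H:=\frac1{|H|}\sum_{h\in H}h$ and $A_H:=\mathrm{Im}(np_H)$ for a suitable positive integer $n$; the $q_i$ act as endomorphisms of $A_H$. $\chi_V$ is extended linearly to $\mathbb{Q}[G]$. Define $e_W:=\frac{\dim V}{|G|}\sum_{g}\chi_V(g^{-1})g$, $f_{H,\widetilde W}:=p_He_W$, and $A_{H,\widetilde W}:=\mathrm{Im}(f_{H,\widetilde W})$, with $\mathrm{Im}(\alpha)=\mathrm{Im}(n\alpha)$ for any positive integer $n$ making $n\alpha$ an endomorphism. *)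

theory Defs
  imports "HOL-Algebra.Coset" "Jordan_Normal_Form.Matrix"
begin

definition zmul :: "int \<Rightarrow> 'a::ab_group_add \<Rightarrow> 'a" where
  "zmul k a = (if 0 \<le> k then (\<Sum>i<nat k. a) else - (\<Sum>i<nat (- k). a))"

definition additive_action :: "('g, 'b) monoid_scheme \<Rightarrow> ('g \<Rightarrow> 'a::ab_group_add \<Rightarrow> 'a) \<Rightarrow> bool" where
  "additive_action G act \<longleftrightarrow>
     (\<forall>g\<in>carrier G. \<forall>a b. act g (a + b) = act g a + act g b) \<and>
     (\<forall>a. act \<one>\<^bsub>G\<^esub> a = a) \<and>
     (\<forall>x\<in>carrier G. \<forall>y\<in>carrier G. \<forall>a. act (x \<otimes>\<^bsub>G\<^esub> y) a = act x (act y a))"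

definition conv :: "('g, 'b) monoid_scheme \<Rightarrow> ('g \<Rightarrow> complex) \<Rightarrow> ('g \<Rightarrow> complex) \<Rightarrow> 'g \<Rightarrow> complex" where
  "conv G \<alpha> \<beta> g = (\<Sum>x\<in>carrier G. \<alpha> x * \<beta> (inv\<^bsub>G\<^esub> x \<otimes>\<^bsub>G\<^esub> g))"

definition integral_elt :: "('g, 'b) monoid_scheme \<Rightarrow> ('g \<Rightarrow> complex) \<Rightarrow> bool" where
  "integral_elt G \<alpha> \<longleftrightarrow> (\<forall>g\<in>carrier G. \<alpha> g \<in> \<int>)"

definition int_act :: "('g, 'b) monoid_scheme \<Rightarrow> ('g \<Rightarrow> 'a::ab_group_add \<Rightarrow> 'a) \<Rightarrow> ('g \<Rightarrow> complex) \<Rightarrow> 'a \<Rightarrow> 'a" where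
  "int_act G act \<alpha> a = (\<Sum>g\<in>carrier G. zmul (THE k. \<alpha> g = of_int k) (act g a))"

definition p_elt :: "('g, 'b) monoid_scheme \<Rightarrow> 'g set \<Rightarrow> 'g \<Rightarrow> complex" where
  "p_elt G H g = (if g \<in> H then 1 / of_nat (card H) else 0)"

definition character :: "('g \<Rightarrow> complex mat) \<Rightarrow> 'g \<Rightarrow> complex" where
  "character \<rho> g = (\<Sum>i<dim_row (\<rho> g). \<rho> g $$ (i, i))"

definition char_ext :: "('g, 'b) monoid_scheme \<Rightarrow> ('g \<Rightarrow> complex) \<Rightarrow> ('g \<Rightarrow> complex) \<Rightarrow> complex" where
  "char_ext G \<chi> \<alpha> = (\<Sum>g\<in>carrier G. \<alpha> g * \<chi> g)"

definition e_elt :: "('g, 'b) monoid_scheme \<Rightarrow> nat \<Rightarrow> ('g \<Rightarrow> complex) \<Rightarrow> 'g \<Rightarrow> complex" where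
  "e_elt G d \<chi> g = of_nat d / of_nat (card (carrier G)) * \<chi> (inv\<^bsub>G\<^esub> g)"

definition double_coset :: "('g, 'b) monoid_scheme \<Rightarrow> 'g set \<Rightarrow> 'g \<Rightarrow> 'g set" where
  "double_coset G H x = {h \<otimes>\<^bsub>G\<^esub> x \<otimes>\<^bsub>G\<^esub> k | h k. h \<in> H \<and> k \<in> H}"

definition q_elt :: "('g, 'b) monoid_scheme \<Rightarrow> 'g set \<Rightarrow> 'g set \<Rightarrow> 'g \<Rightarrow> complex" where
  "q_elt G H D g = (if g \<in> D then 1 / of_nat (card H) else 0)"

text \<open>Action of \<open>q_D\<close> on \<open>H\<close>-invariant elements: writing \<open>D = \<Union> x_j H\<close>,
  \<open>q_D = \<Sum>_j x_j p_H\<close>, so \<open>q_D z = \<Sum>_j x_j z\<close> for \<open>H\<close>-invariant \<open>z\<close>.\<close>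
definition q_act :: "('g, 'b) monoid_scheme \<Rightarrow> ('g \<Rightarrow> 'a::ab_group_add \<Rightarrow> 'a) \<Rightarrow> 'g set \<Rightarrow> 'g set \<Rightarrow> 'a \<Rightarrow> 'a" where
  "q_act G act H D z = (\<Sum>C\<in>{x <#\<^bsub>G\<^esub> H | x. x \<in> D}. act (SOME x. x \<in> C) z)"

definition matrix_rep :: "('g, 'b) monoid_scheme \<Rightarrow> nat \<Rightarrow> ('g \<Rightarrow> complex mat) \<Rightarrow> bool" where
  "matrix_rep G d \<rho> \<longleftrightarrow>
     (\<forall>g\<in>carrier G. \<rho> g \<in> carrier_mat d d) \<and>
     \<rho> \<one>\<^bsub>G\<^esub> = 1\<^sub>m d \<and>
     (\<forall>x\<in>carrier G. \<forall>y\<in>carrier G. \<rho> (x \<otimes>\<^bsub>G\<^esub> y) = \<rho> x * \<rho> y)"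

definition complex_subspace :: "nat \<Rightarrow> complex vec set \<Rightarrow> bool" where
  "complex_subspace d S \<longleftrightarrow> S \<subseteq> carrier_vec d \<and> 0\<^sub>v d \<in> S \<and>
     (\<forall>v\<in>S. \<forall>w\<in>S. v + w \<in> S) \<and> (\<forall>c. \<forall>v\<in>S. c \<cdot>\<^sub>v v \<in> S)"

definition irreducible_rep :: "('g, 'b) monoid_scheme \<Rightarrow> nat \<Rightarrow> ('g \<Rightarrow> complex mat) \<Rightarrow> bool" where
  "irreducible_rep G d \<rho> \<longleftrightarrow> matrix_rep G d \<rho> \<and> d > 0 \<and>
     (\<forall>S. complex_subspace d S \<and> (\<forall>g\<in>carrier G. \<forall>v\<in>S. \<rho> g *\<^sub>v v \<in> S)
          \<longrightarrow> S = {0\<^sub>v d} \<or> S = carrier_vec d)"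

definition fixed_space :: "nat \<Rightarrow> ('g \<Rightarrow> complex mat) \<Rightarrow> 'g set \<Rightarrow> complex vec set" where
  "fixed_space d \<rho> H = {v \<in> carrier_vec d. \<forall>h\<in>H. \<rho> h *\<^sub>v v = v}"

definition one_dimensional :: "nat \<Rightarrow> complex vec set \<Rightarrow> bool" where
  "one_dimensional d S \<longleftrightarrow> (\<exists>v\<in>carrier_vec d. v \<noteq> 0\<^sub>v d \<and> S = {c \<cdot>\<^sub>v v | c. True})"

end

theory Submission
  imports Defs "Jordan_Normal_Form.Char_Poly" "HOL-Algebra.Left_Coset"
begin

text \<open>Extend \<open>\<rho>\<close> linearly to the group algebra and put \<open>P = \<rho>(p\<^sub>H)\<close>, \<open>Q = \<rho>(q\<^sub>D)\<close>.
  \<open>P\<close> is a projection onto the line \<open>V\<^sup>H\<close> and \<open>PQ = Q = QP\<close>, hence \<open>Q = tr(Q) P = \<chi>(q\<^sub>D) P\<close>.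
  For \<open>0 \<noteq> v \<in> V\<^sup>H\<close> a coordinate of \<open>r \<mapsto> \<rho>(r) v\<close> is a function on \<open>G/H\<close>, and \<open>\<rho>(r) Q v = \<chi>(q\<^sub>D) \<rho>(r) v\<close>
  says that it is an eigenvector, with eigenvalue \<open>\<chi>(q\<^sub>D)\<close>, of the Hecke operator of \<open>D\<close>, whose
  matrix has entries \<open>0\<close> and \<open>1\<close>. So \<open>\<chi>(q\<^sub>D)\<close> is an algebraic integer, and being rational it is an
  integer \<open>k\<close>. Finally \<open>Q = kP\<close> and the character formula for \<open>e\<close> give \<open>q\<^sub>D e = k p\<^sub>H e\<close> in the
  group algebra, so \<open>q\<^sub>D\<close> acts as multiplication by \<open>k\<close> on the image of \<open>n p\<^sub>H e\<close>.\<close>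

section \<open>Integer multiples and the action of integral group algebra elements\<close>

lemma sum_const_lessThan_add:
  fixes m n :: nat shows "(\<Sum>i<m + n. a) = (\<Sum>i<m. a) + (\<Sum>i<n. a :: 'a::comm_monoid_add)"
  by (induction n) (simp_all add: add.assoc)

lemma sum_const_lessThan_mult:
  fixes m n :: nat shows "(\<Sum>i<m * n. a) = (\<Sum>i<m. \<Sum>j<n. a :: 'a::comm_monoid_add)"
  by (induction m) (simp_all add: sum_const_lessThan_add add.commute)

lemma zmul_of_nat_diff: "zmul (int m - int n) a = (\<Sum>i<m. a) - (\<Sum>i<n. a)"
proof (cases "n \<le> m")
  case True
  then have "zmul (int m - int n) a = (\<Sum>i<m - n. a)"
    by (simp add: zmul_def nat_diff_distrib)
  moreover have "(\<Sum>i<m. a) = (\<Sum>i<m - n. a) + (\<Sum>i<n. a)"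
    using True sum_const_lessThan_add[where m="m - n" and n=n] by simp
  ultimately show ?thesis by simp
next
  case False
  then have "zmul (int m - int n) a = - (\<Sum>i<n - m. a)"
    by (simp add: zmul_def nat_diff_distrib)
  moreover have "(\<Sum>i<n. a) = (\<Sum>i<n - m. a) + (\<Sum>i<m. a)"
    using False sum_const_lessThan_add[where m="n - m" and n=m] by simp
  ultimately show ?thesis by simp
qed

lemma zmul_add_left: "zmul (k + l) a = zmul k a + zmul l a"
proof -
  obtain m1 n1 m2 n2 where "k = int m1 - int n1" "l = int m2 - int n2"
    by (metis int_diff_cases)
  moreover have "int m1 - int n1 + (int m2 - int n2) = int (m1 + m2) - int (n1 + n2)" by simp
  ultimately show ?thesis
    by (simp only: zmul_of_nat_diff sum_const_lessThan_add) simp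
qed

lemma zmul_add_right: "zmul k (a + b) = zmul k a + zmul k b"
  by (cases k rule: int_diff_cases) (simp add: zmul_of_nat_diff sum.distrib)

lemma zmul_mult: "zmul (k * l) a = zmul k (zmul l a)"
proof -
  obtain m1 n1 m2 n2 where k: "k = int m1 - int n1" and l: "l = int m2 - int n2"
    by (metis int_diff_cases)
  have "k * l = int (m1 * m2 + n1 * n2) - int (m1 * n2 + n1 * m2)"
    unfolding k l by (simp add: algebra_simps)
  then have "zmul (k * l) a = (\<Sum>i<m1 * m2 + n1 * n2. a) - (\<Sum>i<m1 * n2 + n1 * m2. a)"
    by (simp only: zmul_of_nat_diff)
  also have "\<dots> = zmul k (zmul l a)"
    unfolding k l zmul_of_nat_diff
    by (simp add: sum_const_lessThan_add sum_const_lessThan_mult sum_subtractf)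
  finally show ?thesis .
qed

lemma zmul_zero_left [simp]: "zmul 0 a = 0"
  by (simp add: zmul_def)

lemma zmul_zero_right [simp]: "zmul k 0 = 0"
  by (simp add: zmul_def)

lemma zmul_sum_left: "zmul (\<Sum>x\<in>A. k x) a = (\<Sum>x\<in>A. zmul (k x) a)"
  by (induction A rule: infinite_finite_induct) (simp_all add: zmul_add_left)

lemma zmul_sum_right: "zmul k (\<Sum>x\<in>A. f x) = (\<Sum>x\<in>A. zmul k (f x))"
  by (induction A rule: infinite_finite_induct) (simp_all add: zmul_add_right)

lemma zmul_additive:
  assumes "\<And>a b. f (a + b) = f a + f b"
  shows "f (zmul k a) = zmul k (f a)"
proof -
  have "f 0 = 0" using assms[of 0 0] by simp
  then have "f (\<Sum>i<m. a) = (\<Sum>i<m. f a)" for m :: nat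
    by (induction m) (simp_all add: assms)
  moreover have "f (b - c) = f b - f c" for b c
    using assms[of "b - c" c] by (simp add: algebra_simps)
  ultimately show ?thesis
    by (cases k rule: int_diff_cases) (simp add: zmul_of_nat_diff)
qed

text \<open>\<open>int_act\<close> reads its coefficients through \<open>THE\<close>, which is meaningful only for
  integer values; all reasoning about integral elements goes through this lemma.\<close>

lemma int_act_of_int_coeffs:
  assumes "\<And>g. g \<in> carrier G \<Longrightarrow> \<alpha> g = of_int (k g)"
  shows "int_act G act \<alpha> a = (\<Sum>g\<in>carrier G. zmul (k g) (act g a))"
  unfolding int_act_def using assms by (intro sum.cong refl) simp

lemma int_act_cong:
  "(\<And>g. g \<in> carrier G \<Longrightarrow> \<alpha> g = \<beta> g) \<Longrightarrow> int_act G act \<alpha> a = int_act G act \<beta> a"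
  unfolding int_act_def by simp

lemma int_act_sum:
  assumes "\<And>i g. i \<in> I \<Longrightarrow> g \<in> carrier G \<Longrightarrow> \<alpha> i g = of_int (k i g)"
  shows "int_act G act (\<lambda>g. \<Sum>i\<in>I. \<alpha> i g) a = (\<Sum>i\<in>I. int_act G act (\<alpha> i) a)"
proof -
  have "int_act G act (\<lambda>g. \<Sum>i\<in>I. \<alpha> i g) a = (\<Sum>g\<in>carrier G. zmul (\<Sum>i\<in>I. k i g) (act g a))"
    using assms by (intro int_act_of_int_coeffs) simp
  also have "\<dots> = (\<Sum>i\<in>I. \<Sum>g\<in>carrier G. zmul (k i g) (act g a))"
    by (simp add: zmul_sum_left sum.swap[of _ "carrier G"])
  also have "\<dots> = (\<Sum>i\<in>I. int_act G act (\<alpha> i) a)"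
    using assms by (intro sum.cong refl int_act_of_int_coeffs[symmetric]) simp
  finally show ?thesis .
qed

lemma int_act_scale:
  assumes "\<And>g. g \<in> carrier G \<Longrightarrow> \<beta> g = of_int (l g)"
  shows "int_act G act (\<lambda>g. of_int k * \<beta> g) a = zmul k (int_act G act \<beta> a)"
proof -
  have "int_act G act (\<lambda>g. of_int k * \<beta> g) a = (\<Sum>g\<in>carrier G. zmul (k * l g) (act g a))"
    using assms by (intro int_act_of_int_coeffs) simp
  also have "\<dots> = zmul k (int_act G act \<beta> a)"
    by (simp add: int_act_of_int_coeffs[OF assms] zmul_mult zmul_sum_right)
  finally show ?thesis .
qed

section \<open>Projections onto a line and eigenvalues of integer matrices\<close>

definition trace :: "'a::comm_ring mat \<Rightarrow> 'a" where
  "trace A = (\<Sum>i<dim_row A. A $$ (i, i))"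

lemma trace_smult: "A \<in> carrier_mat n n \<Longrightarrow> trace (c \<cdot>\<^sub>m A) = c * trace A"
  by (simp add: trace_def sum_distrib_left)

lemma smult_mat_mult_mat_vec:
  fixes A :: "'a::comm_ring mat"
  assumes "A \<in> carrier_mat m n" and "v \<in> carrier_vec n"
  shows "(c \<cdot>\<^sub>m A) *\<^sub>v v = c \<cdot>\<^sub>v (A *\<^sub>v v)"
  using assms by (intro eq_vecI) (auto simp: scalar_prod_def sum_distrib_left mult_ac)

lemma mult_mat_vec_unit_vec:
  fixes A :: "'a::comm_ring_1 mat"
  assumes "A \<in> carrier_mat m n" and "j < n"
  shows "A *\<^sub>v unit_vec n j = col A j"
  using col_mult2[of A m n "1\<^sub>m n" n j] assms by (simp add: right_mult_one_mat)

lemma nonzero_vec_index: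
  assumes "v \<in> carrier_vec n" and "v \<noteq> 0\<^sub>v n"
  shows "\<exists>i<n. v $ i \<noteq> 0"
proof (rule ccontr)
  assume "\<not> (\<exists>i<n. v $ i \<noteq> 0)"
  then have "v = 0\<^sub>v n" using assms(1) by (intro eq_vecI) auto
  with assms(2) show False by simp
qed

definition line_projection :: "nat \<Rightarrow> 'a::field mat \<Rightarrow> 'a vec \<Rightarrow> bool" where
  "line_projection d P v \<longleftrightarrow> P \<in> carrier_mat d d \<and> v \<in> carrier_vec d \<and> v \<noteq> 0\<^sub>v d \<and>
     P *\<^sub>v v = v \<and> (\<forall>u\<in>carrier_vec d. \<exists>l. P *\<^sub>v u = l \<cdot>\<^sub>v v)"

lemma line_projection_trace:
  assumes "line_projection d P v"
  shows "trace P = 1"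
proof -
  have P: "P \<in> carrier_mat d d" and v: "v \<in> carrier_vec d" "v \<noteq> 0\<^sub>v d" and Pv: "P *\<^sub>v v = v"
    using assms by (auto simp: line_projection_def)
  have "\<forall>j\<in>{..<d}. \<exists>l. P *\<^sub>v unit_vec d j = l \<cdot>\<^sub>v v"
    using assms unfolding line_projection_def by simp
  then obtain l where l: "\<And>j. j < d \<Longrightarrow> P *\<^sub>v unit_vec d j = l j \<cdot>\<^sub>v v"
    by (metis bchoice lessThan_iff)
  have P_entry: "P $$ (i, j) = l j * v $ i" if "i < d" "j < d" for i j
  proof -
    have "P $$ (i, j) = col P j $ i" using P that by simp
    also have "\<dots> = l j * v $ i"
      using l[OF that(2)] mult_mat_vec_unit_vec[OF P that(2)] v that by simp
    finally show ?thesis .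
  qed
  obtain i0 where i0: "i0 < d" "v $ i0 \<noteq> 0"
    using nonzero_vec_index[OF v] by blast
  have "v $ i0 = (P *\<^sub>v v) $ i0" by (simp add: Pv)
  also have "\<dots> = (\<Sum>k<d. P $$ (i0, k) * v $ k)"
    using P v i0 by (simp add: scalar_prod_def lessThan_atLeast0)
  also have "\<dots> = v $ i0 * (\<Sum>k<d. l k * v $ k)"
    using i0 by (simp add: P_entry sum_distrib_left mult_ac)
  finally have "(\<Sum>k<d. l k * v $ k) = 1" using i0 by simp
  moreover have "trace P = (\<Sum>k<d. l k * v $ k)"
    using P by (simp add: trace_def P_entry)
  ultimately show ?thesis by simp
qed

lemma line_projection_absorb:
  assumes proj: "line_projection d P v" and Q: "Q \<in> carrier_mat d d"
    and PQ: "P * Q = Q" and QP: "Q * P = Q"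
  shows "Q = trace Q \<cdot>\<^sub>m P"
proof -
  have P: "P \<in> carrier_mat d d" and v: "v \<in> carrier_vec d"
    and onto: "\<And>u. u \<in> carrier_vec d \<Longrightarrow> \<exists>l. P *\<^sub>v u = l \<cdot>\<^sub>v v"
    using proj by (auto simp: line_projection_def)
  have "Q *\<^sub>v v = P *\<^sub>v (Q *\<^sub>v v)"
    using P Q v by (metis PQ assoc_mult_mat_vec)
  then obtain \<mu> where \<mu>: "Q *\<^sub>v v = \<mu> \<cdot>\<^sub>v v"
    using onto[of "Q *\<^sub>v v"] Q v by auto
  have Q_eq: "Q = \<mu> \<cdot>\<^sub>m P"
  proof (rule mat_col_eqI)
    fix j assume "j < dim_col (\<mu> \<cdot>\<^sub>m P)"
    then have j: "j < d" using P by simp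
    obtain l where l: "P *\<^sub>v unit_vec d j = l \<cdot>\<^sub>v v" using onto[of "unit_vec d j"] by auto
    have "col Q j = (Q * P) *\<^sub>v unit_vec d j"
      using QP mult_mat_vec_unit_vec[OF Q j] by simp
    also have "\<dots> = Q *\<^sub>v (l \<cdot>\<^sub>v v)"
      using P Q l by (simp flip: l)
    also have "\<dots> = \<mu> \<cdot>\<^sub>v (P *\<^sub>v unit_vec d j)"
      using Q v \<mu> l by (simp add: mult_mat_vec smult_smult_assoc mult.commute)
    also have "\<dots> = col (\<mu> \<cdot>\<^sub>m P) j"
      using P j by (simp add: mult_mat_vec_unit_vec[OF P j])
    finally show "col Q j = col (\<mu> \<cdot>\<^sub>m P) j" .
  qed (use P Q in auto)
  then have "trace Q = \<mu>"
    using line_projection_trace[OF proj] trace_smult[OF P] by simp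
  with Q_eq show ?thesis by simp
qed

lemma algebraic_int_eigenvalue_of_int_mat:
  fixes A :: "int mat" and c :: complex
  assumes A: "A \<in> carrier_mat m m" and t: "t \<in> carrier_vec m" "t \<noteq> 0\<^sub>v m"
    and eigen: "map_mat of_int A *\<^sub>v t = c \<cdot>\<^sub>v t"
  shows "algebraic_int c"
proof -
  have A': "map_mat of_int A \<in> carrier_mat m m" using A by simp
  have "eigenvalue (map_mat of_int A) c"
    unfolding eigenvalue_def eigenvector_def using A t eigen by auto
  then have "poly (char_poly (map_mat of_int A)) c = 0"
    using eigenvalue_root_char_poly[OF A'] by blast
  then have "poly (of_int_poly (char_poly A)) c = 0"
    unfolding of_int_hom.char_poly_hom[OF A] .
  moreover have "lead_coeff (char_poly A) = 1"
    using degree_monic_char_poly[OF A] by simp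
  ultimately show ?thesis unfolding algebraic_int_altdef_ipoly by blast
qed

lemma algebraic_int_eigenvalue_of_int_kernel:
  fixes c :: complex
  assumes L: "finite L" and z: "z \<in> L" "t z \<noteq> 0"
    and eigen: "\<And>x. x \<in> L \<Longrightarrow> c * t x = (\<Sum>y\<in>L. of_int (A x y) * t y)"
  shows "algebraic_int c"
proof -
  obtain xs where xs: "set xs = L" "distinct xs" using finite_distinct_list[OF L] by blast
  define m where "m = length xs"
  define M where "M = mat m m (\<lambda>(i, j). A (xs ! i) (xs ! j))"
  define w where "w = vec m (\<lambda>i. t (xs ! i))"
  have sum_L: "(\<Sum>j=0..<m. f (xs ! j)) = (\<Sum>y\<in>L. f y)" for f :: "_ \<Rightarrow> complex"
    unfolding m_def xs(1)[symmetric]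
    by (rule sum.reindex_bij_betw) (rule bij_betw_nth[OF xs(2)], auto)
  have "map_mat of_int M *\<^sub>v w = c \<cdot>\<^sub>v w"
  proof (rule eq_vecI)
    fix i assume "i < dim_vec (c \<cdot>\<^sub>v w)"
    then have i: "i < m" by (simp add: w_def)
    then have "xs ! i \<in> L" using xs(1) by (auto simp: m_def)
    then have "(\<Sum>j=0..<m. of_int (A (xs ! i) (xs ! j)) * t (xs ! j)) = c * t (xs ! i)"
      using sum_L[of "\<lambda>y. of_int (A (xs ! i) y) * t y"] by (simp add: eigen)
    then show "(map_mat of_int M *\<^sub>v w) $ i = (c \<cdot>\<^sub>v w) $ i"
      using i by (simp add: M_def w_def scalar_prod_def)
  qed (simp add: M_def w_def)
  moreover obtain i0 where "i0 < m" "xs ! i0 = z"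
    using z xs(1) by (metis in_set_conv_nth m_def)
  then have "w $ i0 \<noteq> 0\<^sub>v m $ i0" using z by (simp add: w_def)
  then have "w \<noteq> 0\<^sub>v m" by metis
  ultimately show ?thesis
    by (intro algebraic_int_eigenvalue_of_int_mat[of M m w]) (auto simp: M_def w_def)
qed

section \<open>Cosets, double cosets and the elements \<open>p\<^sub>H\<close>, \<open>q\<^sub>D\<close>\<close>

locale hecke_pair = group G for G (structure) +
  fixes H
  assumes subgroup_H: "subgroup H G" and finite_carrier: "finite (carrier G)"
begin

lemma H_subset: "H \<subseteq> carrier G"
  using subgroup.subset[OF subgroup_H] .

lemma H_carrier: "h \<in> H \<Longrightarrow> h \<in> carrier G"
  using H_subset by blast

lemma H_mult: "h \<in> H \<Longrightarrow> k \<in> H \<Longrightarrow> h \<otimes> k \<in> H"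
  using subgroup.m_closed[OF subgroup_H] .

lemma H_inv: "h \<in> H \<Longrightarrow> inv h \<in> H"
  using subgroup.m_inv_closed[OF subgroup_H] .

lemma card_H_pos: "card H > 0"
  using finite_subset[OF H_subset finite_carrier] subgroup.one_closed[OF subgroup_H]
  by (auto simp: card_gt_0_iff)

lemma sum_l_coset:
  assumes "x \<in> carrier G"
  shows "(\<Sum>y\<in>x <# H. f y) = (\<Sum>h\<in>H. f (x \<otimes> h))"
proof -
  have "x <# H = (\<lambda>h. x \<otimes> h) ` H" by (auto simp: l_coset_def)
  then show ?thesis using inj_on_g'[OF H_subset assms] by (simp add: sum.reindex)
qed

definition lcosets_in :: "'a set \<Rightarrow> 'a set set" where
  "lcosets_in E = {x <# H | x. x \<in> E}"

lemma lcosets_in_rep: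
  assumes "E \<subseteq> carrier G" and "C \<in> lcosets_in E"
  shows "(SOME y. y \<in> C) \<in> carrier G" and "(SOME y. y \<in> C) <# H = C"
proof -
  obtain x where x: "x \<in> carrier G" and C: "C = x <# H"
    using assms unfolding lcosets_in_def by blast
  have "x \<in> C" unfolding C by (rule lcos_self[OF x subgroup_H])
  then have rep: "(SOME y. y \<in> C) \<in> x <# H" unfolding C by (rule someI)
  show "(SOME y. y \<in> C) \<in> carrier G"
    by (rule l_coset_carrier[OF rep x subgroup_H])
  show "(SOME y. y \<in> C) <# H = C"
    using l_repr_independence[OF rep x subgroup_H] unfolding C by simp
qed

lemma sum_lcosets_in:
  assumes E: "E \<subseteq> carrier G" and stable: "\<And>y h. y \<in> E \<Longrightarrow> h \<in> H \<Longrightarrow> y \<otimes> h \<in> E"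
  shows "(\<Sum>y\<in>E. f y) = (\<Sum>C\<in>lcosets_in E. \<Sum>y\<in>C. f y)"
proof -
  have union: "\<Union>(lcosets_in E) = E"
  proof
    show "\<Union>(lcosets_in E) \<subseteq> E"
      using stable by (auto simp: lcosets_in_def l_coset_def)
    show "E \<subseteq> \<Union>(lcosets_in E)"
      using E lcos_self[OF _ subgroup_H] by (auto simp: lcosets_in_def)
  qed
  have "finite E" using E finite_carrier finite_subset by blast
  then have "\<forall>C\<in>lcosets_in E. finite C" using union by (metis Union_upper finite_subset)
  moreover have "\<forall>A\<in>lcosets_in E. \<forall>B\<in>lcosets_in E. A \<noteq> B \<longrightarrow> A \<inter> B = {}"
    using E l_repr_independence[OF _ _ subgroup_H] unfolding lcosets_in_def by blast
  ultimately show ?thesis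
    using sum.Union_disjoint[of "lcosets_in E" f] union by simp
qed

lemma sum_lcosets_in_rep:
  assumes "E \<subseteq> carrier G" and "\<And>y h. y \<in> E \<Longrightarrow> h \<in> H \<Longrightarrow> y \<otimes> h \<in> E"
  shows "(\<Sum>C\<in>lcosets_in E. \<Sum>h\<in>H. f ((SOME y. y \<in> C) \<otimes> h)) = (\<Sum>y\<in>E. f y)"
proof -
  have "(\<Sum>C\<in>lcosets_in E. \<Sum>y\<in>C. f y) = (\<Sum>C\<in>lcosets_in E. \<Sum>h\<in>H. f ((SOME y. y \<in> C) \<otimes> h))"
  proof (rule sum.cong[OF refl])
    fix C assume "C \<in> lcosets_in E"
    note rep = lcosets_in_rep[OF assms(1) this]
    show "(\<Sum>y\<in>C. f y) = (\<Sum>h\<in>H. f ((SOME y. y \<in> C) \<otimes> h))"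
      using sum_l_coset[OF rep(1)] unfolding rep(2) .
  qed
  with sum_lcosets_in[OF assms, of f] show ?thesis by simp
qed

lemma double_coset_subset: "x \<in> carrier G \<Longrightarrow> double_coset G H x \<subseteq> carrier G"
  unfolding double_coset_def using H_carrier by blast

lemma double_coset_mult_right:
  assumes "x \<in> carrier G" "y \<in> double_coset G H x" "k \<in> H"
  shows "y \<otimes> k \<in> double_coset G H x"
proof -
  obtain h1 k1 where "h1 \<in> H" "k1 \<in> H" "y = h1 \<otimes> x \<otimes> k1"
    using assms(2) unfolding double_coset_def by blast
  moreover from this have "y \<otimes> k = h1 \<otimes> x \<otimes> (k1 \<otimes> k)"
    using assms by (simp add: m_assoc H_carrier)
  ultimately show ?thesis unfolding double_coset_def using H_mult assms(3) by blast
qed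

lemma double_coset_mult_left:
  assumes "x \<in> carrier G" "y \<in> double_coset G H x" "k \<in> H"
  shows "k \<otimes> y \<in> double_coset G H x"
proof -
  obtain h1 k1 where "h1 \<in> H" "k1 \<in> H" "y = h1 \<otimes> x \<otimes> k1"
    using assms(2) unfolding double_coset_def by blast
  moreover from this have "k \<otimes> y = (k \<otimes> h1) \<otimes> x \<otimes> k1"
    using assms by (simp add: m_assoc H_carrier)
  ultimately show ?thesis unfolding double_coset_def using H_mult assms(3) by blast
qed

lemma double_coset_mult_right_iff:
  assumes x: "x \<in> carrier G" and y: "y \<in> carrier G" and k: "k \<in> H"
  shows "y \<otimes> k \<in> double_coset G H x \<longleftrightarrow> y \<in> double_coset G H x"
proof
  assume "y \<otimes> k \<in> double_coset G H x"
  from double_coset_mult_right[OF x this H_inv[OF k]]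
  show "y \<in> double_coset G H x" using y k by (simp add: m_assoc H_carrier)
qed (rule double_coset_mult_right[OF x _ k])

lemma double_coset_mult_left_iff:
  assumes x: "x \<in> carrier G" and y: "y \<in> carrier G" and k: "k \<in> H"
  shows "k \<otimes> y \<in> double_coset G H x \<longleftrightarrow> y \<in> double_coset G H x"
proof
  assume "k \<otimes> y \<in> double_coset G H x"
  from double_coset_mult_left[OF x this H_inv[OF k]]
  show "y \<in> double_coset G H x" using y k by (simp add: m_assoc[symmetric] H_carrier)
qed (rule double_coset_mult_left[OF x _ k])

lemma mem_l_coset_iff:
  assumes "r \<in> carrier G" "g \<in> carrier G" "E \<subseteq> carrier G"
  shows "g \<in> r <# E \<longleftrightarrow> inv r \<otimes> g \<in> E"
proof
  assume "g \<in> r <# E"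
  then obtain y where "y \<in> E" "g = r \<otimes> y" unfolding l_coset_def by blast
  then show "inv r \<otimes> g \<in> E" using assms by (auto simp: m_assoc[symmetric])
next
  assume "inv r \<otimes> g \<in> E"
  moreover have "g = r \<otimes> (inv r \<otimes> g)" using assms by (simp add: m_assoc[symmetric])
  ultimately show "g \<in> r <# E" unfolding l_coset_def by blast
qed

lemma sum_p_elt:
  "(\<Sum>g\<in>carrier G. p_elt G H g * f g) = (\<Sum>h\<in>H. f h) / of_nat (card H)"
proof -
  have "(\<Sum>g\<in>carrier G. p_elt G H g * f g) = (\<Sum>g\<in>carrier G. if g \<in> H then f g / of_nat (card H) else 0)"
    by (intro sum.cong) (auto simp: p_elt_def)
  also have "\<dots> = (\<Sum>g\<in>carrier G \<inter> H. f g / of_nat (card H))"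
    using finite_carrier by (simp add: sum.inter_restrict)
  also have "carrier G \<inter> H = H" using H_subset by blast
  finally show ?thesis by (simp add: sum_divide_distrib)
qed

lemma sum_q_elt:
  assumes "D \<subseteq> carrier G"
  shows "(\<Sum>g\<in>carrier G. q_elt G H D g * f g) = (\<Sum>y\<in>D. f y) / of_nat (card H)"
proof -
  have "(\<Sum>g\<in>carrier G. q_elt G H D g * f g) = (\<Sum>g\<in>carrier G. if g \<in> D then f g / of_nat (card H) else 0)"
    by (intro sum.cong) (auto simp: q_elt_def)
  also have "\<dots> = (\<Sum>g\<in>carrier G \<inter> D. f g / of_nat (card H))"
    using finite_carrier by (simp add: sum.inter_restrict)
  also have "carrier G \<inter> D = D" using assms by blast
  finally show ?thesis by (simp add: sum_divide_distrib)
qed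

lemma conv_indicator:
  assumes "x \<in> carrier G"
  shows "conv G (\<lambda>y. of_bool (y = x)) \<beta> g = \<beta> (inv x \<otimes> g)"
proof -
  have "conv G (\<lambda>y. of_bool (y = x)) \<beta> g = (\<Sum>y\<in>carrier G. if x = y then \<beta> (inv y \<otimes> g) else 0)"
    unfolding conv_def by (intro sum.cong) auto
  then show ?thesis using assms finite_carrier by simp
qed

lemma conv_p_elt_left_invariant:
  assumes inv: "\<And>h y. h \<in> H \<Longrightarrow> y \<in> carrier G \<Longrightarrow> f (h \<otimes> y) = f y" and g: "g \<in> carrier G"
  shows "conv G (p_elt G H) f g = f g"
proof -
  have "conv G (p_elt G H) f g = (\<Sum>h\<in>H. f (inv h \<otimes> g)) / of_nat (card H)"
    unfolding conv_def by (rule sum_p_elt)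
  also have "\<dots> = (\<Sum>h\<in>H. f g) / of_nat (card H)"
    using g H_inv H_carrier by (intro arg_cong2[where f="(/)"] sum.cong refl) (simp add: inv)
  finally show ?thesis using card_H_pos by simp
qed

lemma conv_p_elt_right_invariant:
  assumes inv: "\<And>h y. h \<in> H \<Longrightarrow> y \<in> carrier G \<Longrightarrow> f (y \<otimes> h) = f y" and g: "g \<in> carrier G"
  shows "conv G f (p_elt G H) g = f g"
proof -
  have "conv G f (p_elt G H) g = (\<Sum>y\<in>carrier G. p_elt G H y * f (g \<otimes> inv y))"
    unfolding conv_def
  proof (rule sum.reindex_bij_witness[where i="\<lambda>y. g \<otimes> inv y" and j="\<lambda>x. inv x \<otimes> g"])
    fix x assume x: "x \<in> carrier G"
    show "inv x \<otimes> g \<in> carrier G" using x g by simp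
    show xx: "g \<otimes> inv (inv x \<otimes> g) = x" using x g by (simp add: inv_mult_group m_assoc[symmetric])
    show "p_elt G H (inv x \<otimes> g) * f (g \<otimes> inv (inv x \<otimes> g)) = f x * p_elt G H (inv x \<otimes> g)"
      by (simp add: xx)
  next
    fix y assume y: "y \<in> carrier G"
    show "g \<otimes> inv y \<in> carrier G" using y g by simp
    show "inv (g \<otimes> inv y) \<otimes> g = y" using y g by (simp add: inv_mult_group m_assoc)
  qed
  also have "\<dots> = (\<Sum>h\<in>H. f (g \<otimes> inv h)) / of_nat (card H)" by (rule sum_p_elt)
  also have "\<dots> = (\<Sum>h\<in>H. f g) / of_nat (card H)"
    using g H_inv H_carrier by (intro arg_cong2[where f="(/)"] sum.cong refl) (simp add: inv)
  finally show ?thesis using card_H_pos by simp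
qed

lemma p_elt_mult_left:
  assumes "h \<in> H" "y \<in> carrier G"
  shows "p_elt G H (h \<otimes> y) = p_elt G H y"
proof -
  have "h \<otimes> y \<in> H \<longleftrightarrow> y \<in> H"
    using assms H_mult[OF H_inv[OF assms(1)], of "h \<otimes> y"] H_mult[OF assms(1), of y]
    by (auto simp: m_assoc[symmetric] H_carrier)
  then show ?thesis by (simp add: p_elt_def)
qed

lemma conv_p_elt_q_elt:
  assumes "x \<in> carrier G" "g \<in> carrier G"
  shows "conv G (p_elt G H) (q_elt G H (double_coset G H x)) g = q_elt G H (double_coset G H x) g"
  using assms by (intro conv_p_elt_left_invariant) (simp_all add: q_elt_def double_coset_mult_left_iff)

lemma conv_q_elt_p_elt:
  assumes "x \<in> carrier G" "g \<in> carrier G"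
  shows "conv G (q_elt G H (double_coset G H x)) (p_elt G H) g = q_elt G H (double_coset G H x) g"
  using assms by (intro conv_p_elt_right_invariant) (simp_all add: q_elt_def double_coset_mult_right_iff)

lemma sum_lcosets_conv_p_elt:
  assumes x: "x \<in> carrier G" and g: "g \<in> carrier G"
  defines "D \<equiv> double_coset G H x"
  shows "(\<Sum>C\<in>lcosets_in D. conv G (p_elt G H) \<phi> (inv (SOME y. y \<in> C) \<otimes> g))
    = conv G (q_elt G H D) \<phi> g"
proof -
  have D: "D \<subseteq> carrier G" unfolding D_def by (rule double_coset_subset[OF x])
  have stable: "\<And>y h. y \<in> D \<Longrightarrow> h \<in> H \<Longrightarrow> y \<otimes> h \<in> D"
    unfolding D_def using double_coset_mult_right[OF x] by blast
  have "conv G (p_elt G H) \<phi> (inv r \<otimes> g) = (\<Sum>h\<in>H. \<phi> (inv (r \<otimes> h) \<otimes> g)) / of_nat (card H)"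
    if r: "r \<in> carrier G" for r
    unfolding conv_def sum_p_elt
    using r g H_carrier by (simp add: inv_mult_group m_assoc)
  then have "(\<Sum>C\<in>lcosets_in D. conv G (p_elt G H) \<phi> (inv (SOME y. y \<in> C) \<otimes> g))
      = (\<Sum>C\<in>lcosets_in D. \<Sum>h\<in>H. \<phi> (inv ((SOME y. y \<in> C) \<otimes> h) \<otimes> g)) / of_nat (card H)"
    using lcosets_in_rep(1)[OF D] by (simp add: sum_divide_distrib)
  also have "\<dots> = (\<Sum>y\<in>D. \<phi> (inv y \<otimes> g)) / of_nat (card H)"
    using sum_lcosets_in_rep[OF D stable, of "\<lambda>y. \<phi> (inv y \<otimes> g)"] by simp
  also have "\<dots> = conv G (q_elt G H D) \<phi> g"
    unfolding conv_def sum_q_elt[OF D] ..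
  finally show ?thesis .
qed

lemma act_int_act:
  assumes act: "additive_action G act" and y: "y \<in> carrier G"
  shows "act y (int_act G act \<beta> a) = int_act G act (\<lambda>g. \<beta> (inv y \<otimes> g)) a"
proof -
  let ?k = "\<lambda>g. THE k. \<beta> g = of_int k"
  have act_add: "act y (b + c) = act y b + act y c" for b c
    using act y by (simp add: additive_action_def)
  have act_mult: "act (y \<otimes> g) b = act y (act g b)" if "g \<in> carrier G" for g b
    using act y that by (simp add: additive_action_def)
  have "act y (int_act G act \<beta> a) = (\<Sum>g\<in>carrier G. act y (zmul (?k g) (act g a)))"
    unfolding int_act_def using act_add[of 0 0]
    by (simp add: sum_comp_morphism[of "act y", symmetric, unfolded o_def] act_add)
  also have "\<dots> = (\<Sum>g\<in>carrier G. zmul (?k g) (act (y \<otimes> g) a))"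
    by (intro sum.cong refl) (simp add: zmul_additive[of "act y", OF act_add] act_mult)
  also have "\<dots> = (\<Sum>g\<in>carrier G. zmul (?k (inv y \<otimes> g)) (act g a))"
    by (rule sum.reindex_bij_witness[where i="\<lambda>g. inv y \<otimes> g" and j="\<lambda>g. y \<otimes> g"])
      (use y in \<open>auto simp: m_assoc[symmetric]\<close>)
  finally show ?thesis unfolding int_act_def .
qed

lemma q_act_int_act:
  assumes act: "additive_action G act" and D: "D \<subseteq> carrier G"
    and \<beta>: "\<And>g. g \<in> carrier G \<Longrightarrow> \<beta> g = of_int (l g)"
  shows "q_act G act H D (int_act G act \<beta> a)
    = int_act G act (\<lambda>g. \<Sum>C\<in>lcosets_in D. \<beta> (inv (SOME y. y \<in> C) \<otimes> g)) a"
proof -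
  have rep: "(SOME y. y \<in> C) \<in> carrier G" if "C \<in> lcosets_in D" for C
    using lcosets_in_rep(1)[OF D that] .
  have "q_act G act H D (int_act G act \<beta> a)
      = (\<Sum>C\<in>lcosets_in D. act (SOME y. y \<in> C) (int_act G act \<beta> a))"
    by (simp add: q_act_def lcosets_in_def)
  also have "\<dots> = (\<Sum>C\<in>lcosets_in D. int_act G act (\<lambda>g. \<beta> (inv (SOME y. y \<in> C) \<otimes> g)) a)"
    using rep by (intro sum.cong refl act_int_act[OF act])
  also have "\<dots> = int_act G act (\<lambda>g. \<Sum>C\<in>lcosets_in D. \<beta> (inv (SOME y. y \<in> C) \<otimes> g)) a"
    using rep \<beta> by (intro int_act_sum[symmetric]) simp
  finally show ?thesis .
qed

end

section \<open>The representation on the group algebra\<close>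

locale hecke_rep = hecke_pair +
  fixes d :: nat and \<rho> :: "'a \<Rightarrow> complex mat"
  assumes matrix_rep: "matrix_rep G d \<rho>"
begin

lemma rep_carrier: "g \<in> carrier G \<Longrightarrow> \<rho> g \<in> carrier_mat d d"
  using matrix_rep by (simp add: matrix_rep_def)

lemma dim_rep [simp]: "g \<in> carrier G \<Longrightarrow> dim_row (\<rho> g) = d"  "g \<in> carrier G \<Longrightarrow> dim_col (\<rho> g) = d"
  using rep_carrier[of g] by auto

lemma rep_mult: "x \<in> carrier G \<Longrightarrow> y \<in> carrier G \<Longrightarrow> \<rho> (x \<otimes> y) = \<rho> x * \<rho> y"
  using matrix_rep by (simp add: matrix_rep_def)

lemma index_rep_mult:
  assumes "x \<in> carrier G" "y \<in> carrier G" "i < d" "j < d"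
  shows "\<rho> (x \<otimes> y) $$ (i, j) = (\<Sum>k<d. \<rho> x $$ (i, k) * \<rho> y $$ (k, j))"
  using assms rep_carrier[of x] rep_carrier[of y]
  by (simp add: rep_mult scalar_prod_def lessThan_atLeast0)

definition rep_ext :: "('a \<Rightarrow> complex) \<Rightarrow> complex mat" where
  "rep_ext \<alpha> = mat d d (\<lambda>(i, j). \<Sum>g\<in>carrier G. \<alpha> g * \<rho> g $$ (i, j))"

lemma rep_ext_carrier [simp]: "rep_ext \<alpha> \<in> carrier_mat d d"
  by (simp add: rep_ext_def)

lemma dim_rep_ext [simp]: "dim_row (rep_ext \<alpha>) = d" "dim_col (rep_ext \<alpha>) = d"
  by (simp_all add: rep_ext_def)

lemma index_rep_ext:
  "i < d \<Longrightarrow> j < d \<Longrightarrow> rep_ext \<alpha> $$ (i, j) = (\<Sum>g\<in>carrier G. \<alpha> g * \<rho> g $$ (i, j))"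
  by (simp add: rep_ext_def)

lemma rep_ext_cong: "(\<And>g. g \<in> carrier G \<Longrightarrow> \<alpha> g = \<beta> g) \<Longrightarrow> rep_ext \<alpha> = rep_ext \<beta>"
  unfolding rep_ext_def by (intro cong_mat refl) (auto intro!: sum.cong)

lemma rep_ext_indicator:
  assumes x: "x \<in> carrier G"
  shows "rep_ext (\<lambda>y. of_bool (y = x)) = \<rho> x"
proof (rule eq_matI)
  fix i j assume "i < dim_row (\<rho> x)" "j < dim_col (\<rho> x)"
  then have "i < d" "j < d" using rep_carrier[OF x] by auto
  then have "rep_ext (\<lambda>y. of_bool (y = x)) $$ (i, j) = (\<Sum>g\<in>carrier G. of_bool (g = x) * \<rho> g $$ (i, j))"
    by (rule index_rep_ext)
  also have "\<dots> = (\<Sum>g\<in>carrier G. if x = g then \<rho> g $$ (i, j) else 0)"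
    by (intro sum.cong) auto
  finally show "rep_ext (\<lambda>y. of_bool (y = x)) $$ (i, j) = \<rho> x $$ (i, j)"
    using x finite_carrier by simp
qed (use rep_carrier[OF x] in auto)

lemma rep_ext_conv: "rep_ext \<alpha> * rep_ext \<beta> = rep_ext (conv G \<alpha> \<beta>)"
proof (rule eq_matI)
  fix i j assume "i < dim_row (rep_ext (conv G \<alpha> \<beta>))" "j < dim_col (rep_ext (conv G \<alpha> \<beta>))"
  then have ij: "i < d" "j < d" by auto
  have "(rep_ext \<alpha> * rep_ext \<beta>) $$ (i, j) = (\<Sum>k<d. rep_ext \<alpha> $$ (i, k) * rep_ext \<beta> $$ (k, j))"
    using ij by (simp add: scalar_prod_def lessThan_atLeast0)
  also have "\<dots> = (\<Sum>k<d. (\<Sum>x\<in>carrier G. \<alpha> x * \<rho> x $$ (i, k)) * (\<Sum>y\<in>carrier G. \<beta> y * \<rho> y $$ (k, j)))"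
    using ij by (intro sum.cong) (auto simp: index_rep_ext)
  also have "\<dots> = (\<Sum>k<d. \<Sum>x\<in>carrier G. \<Sum>y\<in>carrier G. \<alpha> x * \<beta> y * (\<rho> x $$ (i, k) * \<rho> y $$ (k, j)))"
    by (simp add: sum_product mult_ac)
  also have "\<dots> = (\<Sum>x\<in>carrier G. \<Sum>y\<in>carrier G. \<Sum>k<d. \<alpha> x * \<beta> y * (\<rho> x $$ (i, k) * \<rho> y $$ (k, j)))"
    by (simp add: sum.swap[where A="{..<d}"])
  also have "\<dots> = (\<Sum>x\<in>carrier G. \<Sum>y\<in>carrier G. \<alpha> x * \<beta> y * \<rho> (x \<otimes> y) $$ (i, j))"
    using ij by (intro sum.cong refl) (simp add: index_rep_mult sum_distrib_left)
  also have "\<dots> = (\<Sum>x\<in>carrier G. \<Sum>g\<in>carrier G. \<alpha> x * \<beta> (inv x \<otimes> g) * \<rho> g $$ (i, j))"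
  proof (rule sum.cong[OF refl])
    fix x assume x: "x \<in> carrier G"
    show "(\<Sum>y\<in>carrier G. \<alpha> x * \<beta> y * \<rho> (x \<otimes> y) $$ (i, j))
        = (\<Sum>g\<in>carrier G. \<alpha> x * \<beta> (inv x \<otimes> g) * \<rho> g $$ (i, j))"
      by (rule sum.reindex_bij_witness[where i="\<lambda>g. inv x \<otimes> g" and j="\<lambda>y. x \<otimes> y"])
        (use x in \<open>auto simp: m_assoc[symmetric]\<close>)
  qed
  also have "\<dots> = (\<Sum>g\<in>carrier G. conv G \<alpha> \<beta> g * \<rho> g $$ (i, j))"
    unfolding conv_def sum_distrib_right by (rule sum.swap)
  also have "\<dots> = rep_ext (conv G \<alpha> \<beta>) $$ (i, j)"
    using ij by (simp add: index_rep_ext)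
  finally show "(rep_ext \<alpha> * rep_ext \<beta>) $$ (i, j) = rep_ext (conv G \<alpha> \<beta>) $$ (i, j)" .
qed auto

lemma rep_ext_mult_vec_index:
  assumes v: "v \<in> carrier_vec d" and i: "i < d"
  shows "(rep_ext \<alpha> *\<^sub>v v) $ i = (\<Sum>g\<in>carrier G. \<alpha> g * (\<rho> g *\<^sub>v v) $ i)"
proof -
  have "(rep_ext \<alpha> *\<^sub>v v) $ i = (\<Sum>k<d. rep_ext \<alpha> $$ (i, k) * v $ k)"
    using v i by (simp add: scalar_prod_def lessThan_atLeast0)
  also have "\<dots> = (\<Sum>k<d. \<Sum>g\<in>carrier G. \<alpha> g * (\<rho> g $$ (i, k) * v $ k))"
    using i by (intro sum.cong refl) (simp add: index_rep_ext sum_distrib_left mult_ac)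
  also have "\<dots> = (\<Sum>g\<in>carrier G. \<alpha> g * (\<Sum>k<d. \<rho> g $$ (i, k) * v $ k))"
    by (simp add: sum.swap[where A="{..<d}"] sum_distrib_left)
  also have "\<dots> = (\<Sum>g\<in>carrier G. \<alpha> g * (\<rho> g *\<^sub>v v) $ i)"
    using v i rep_carrier by (intro sum.cong refl) (simp add: scalar_prod_def lessThan_atLeast0)
  finally show ?thesis .
qed

lemma trace_rep_ext: "trace (rep_ext \<alpha>) = char_ext G (character \<rho>) \<alpha>"
proof -
  have "trace (rep_ext \<alpha>) = (\<Sum>i<d. \<Sum>g\<in>carrier G. \<alpha> g * \<rho> g $$ (i, i))"
    by (simp add: trace_def index_rep_ext)
  also have "\<dots> = (\<Sum>g\<in>carrier G. \<Sum>i<d. \<alpha> g * \<rho> g $$ (i, i))"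
    by (rule sum.swap)
  also have "\<dots> = (\<Sum>g\<in>carrier G. \<alpha> g * character \<rho> g)"
    by (intro sum.cong refl) (simp add: character_def sum_distrib_left)
  finally show ?thesis by (simp add: char_ext_def)
qed

lemma conv_e_elt:
  assumes g: "g \<in> carrier G"
  shows "conv G \<alpha> (e_elt G d (character \<rho>)) g =
    of_nat d / of_nat (card (carrier G)) * trace (\<rho> (inv g) * rep_ext \<alpha>)"
proof -
  have "character \<rho> (inv (inv x \<otimes> g)) = (\<Sum>i<d. \<Sum>k<d. \<rho> (inv g) $$ (i, k) * \<rho> x $$ (k, i))"
    if x: "x \<in> carrier G" for x
  proof -
    have "inv (inv x \<otimes> g) = inv g \<otimes> x" using x g by (simp add: inv_mult_group)
    then show ?thesis
      using x g rep_carrier[of "inv g \<otimes> x"] by (simp add: character_def index_rep_mult)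
  qed
  then have "conv G \<alpha> (e_elt G d (character \<rho>)) g = of_nat d / of_nat (card (carrier G)) *
      (\<Sum>x\<in>carrier G. \<Sum>i<d. \<Sum>k<d. \<rho> (inv g) $$ (i, k) * (\<alpha> x * \<rho> x $$ (k, i)))"
    by (simp add: conv_def e_elt_def sum_distrib_left mult_ac)
  also have "\<dots> = of_nat d / of_nat (card (carrier G)) *
      (\<Sum>i<d. \<Sum>k<d. \<rho> (inv g) $$ (i, k) * (\<Sum>x\<in>carrier G. \<alpha> x * \<rho> x $$ (k, i)))"
    by (simp add: sum.swap[of _ "carrier G"] sum_distrib_left)
  also have "\<dots> = of_nat d / of_nat (card (carrier G)) * trace (\<rho> (inv g) * rep_ext \<alpha>)"
    using g rep_carrier[of "inv g"]
    by (simp add: trace_def index_rep_ext scalar_prod_def lessThan_atLeast0)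
  finally show ?thesis .
qed

lemma rep_mult_rep_ext:
  assumes x: "x \<in> carrier G"
  shows "\<rho> x * rep_ext \<alpha> = rep_ext (\<lambda>g. \<alpha> (inv x \<otimes> g))"
proof -
  have "\<rho> x * rep_ext \<alpha> = rep_ext (\<lambda>y. of_bool (y = x)) * rep_ext \<alpha>"
    by (simp only: rep_ext_indicator[OF x])
  also have "\<dots> = rep_ext (conv G (\<lambda>y. of_bool (y = x)) \<alpha>)"
    by (rule rep_ext_conv)
  also have "\<dots> = rep_ext (\<lambda>g. \<alpha> (inv x \<otimes> g))"
    by (rule rep_ext_cong) (rule conv_indicator[OF x])
  finally show ?thesis .
qed

lemma rep_ext_p_elt_fixed:
  assumes w: "w \<in> fixed_space d \<rho> H"
  shows "rep_ext (p_elt G H) *\<^sub>v w = w"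
proof -
  have wc: "w \<in> carrier_vec d" and fix_w: "\<And>h. h \<in> H \<Longrightarrow> \<rho> h *\<^sub>v w = w"
    using w by (auto simp: fixed_space_def)
  show ?thesis
  proof (rule eq_vecI)
    fix i assume "i < dim_vec w"
    then have i: "i < d" using wc by simp
    have "(rep_ext (p_elt G H) *\<^sub>v w) $ i = (\<Sum>h\<in>H. (\<rho> h *\<^sub>v w) $ i) / of_nat (card H)"
      unfolding rep_ext_mult_vec_index[OF wc i] by (rule sum_p_elt)
    also have "\<dots> = w $ i" using card_H_pos by (simp add: fix_w)
    finally show "(rep_ext (p_elt G H) *\<^sub>v w) $ i = w $ i" .
  qed (use wc in simp)
qed

lemma rep_ext_p_elt_mult_vec_fixed:
  assumes u: "u \<in> carrier_vec d"
  shows "rep_ext (p_elt G H) *\<^sub>v u \<in> fixed_space d \<rho> H"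
proof -
  have "\<rho> h *\<^sub>v (rep_ext (p_elt G H) *\<^sub>v u) = rep_ext (p_elt G H) *\<^sub>v u" if h: "h \<in> H" for h
  proof -
    have "\<rho> h * rep_ext (p_elt G H) = rep_ext (p_elt G H)"
      unfolding rep_mult_rep_ext[OF H_carrier[OF h]]
      using p_elt_mult_left[OF H_inv[OF h]] H_carrier[OF h] by (intro rep_ext_cong) simp
    moreover have "\<rho> h *\<^sub>v (rep_ext (p_elt G H) *\<^sub>v u) = (\<rho> h * rep_ext (p_elt G H)) *\<^sub>v u"
      using assoc_mult_mat_vec[OF rep_carrier[OF H_carrier[OF h]] rep_ext_carrier u] by simp
    ultimately show ?thesis by simp
  qed
  then show ?thesis using mult_mat_vec_carrier[OF rep_ext_carrier u] by (simp add: fixed_space_def)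
qed

lemma rep_ext_p_elt_line_projection:
  assumes "one_dimensional d (fixed_space d \<rho> H)"
  obtains v where "line_projection d (rep_ext (p_elt G H)) v" and "v \<in> fixed_space d \<rho> H"
proof -
  obtain v where v: "v \<in> carrier_vec d" "v \<noteq> 0\<^sub>v d" and line: "fixed_space d \<rho> H = {c \<cdot>\<^sub>v v | c. True}"
    using assms unfolding one_dimensional_def by blast
  have "v = 1 \<cdot>\<^sub>v v" by simp
  then have "v \<in> fixed_space d \<rho> H" unfolding line by blast
  moreover have "line_projection d (rep_ext (p_elt G H)) v"
    unfolding line_projection_def
  proof (intro conjI ballI)
    show "rep_ext (p_elt G H) *\<^sub>v v = v" by (rule rep_ext_p_elt_fixed[OF calculation])
    fix u :: "complex vec" assume "u \<in> carrier_vec d"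
    from rep_ext_p_elt_mult_vec_fixed[OF this]
    show "\<exists>l. rep_ext (p_elt G H) *\<^sub>v u = l \<cdot>\<^sub>v v" unfolding line by blast
  qed (use v in simp_all)
  ultimately show ?thesis using that by blast
qed

lemma rep_ext_q_elt:
  assumes x: "x \<in> carrier G" and one_dim: "one_dimensional d (fixed_space d \<rho> H)"
  defines "q \<equiv> q_elt G H (double_coset G H x)"
  shows "rep_ext q = char_ext G (character \<rho>) q \<cdot>\<^sub>m rep_ext (p_elt G H)"
proof -
  obtain v where "line_projection d (rep_ext (p_elt G H)) v"
    using rep_ext_p_elt_line_projection[OF one_dim] by blast
  moreover have "rep_ext (p_elt G H) * rep_ext q = rep_ext q"
    unfolding rep_ext_conv q_def using conv_p_elt_q_elt[OF x] by (intro rep_ext_cong) simp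
  moreover have "rep_ext q * rep_ext (p_elt G H) = rep_ext q"
    unfolding rep_ext_conv q_def using conv_q_elt_p_elt[OF x] by (intro rep_ext_cong) simp
  ultimately show ?thesis
    using line_projection_absorb[of d _ v "rep_ext q"] by (simp add: trace_rep_ext)
qed

lemma conv_q_elt_e_elt:
  assumes x: "x \<in> carrier G" and one_dim: "one_dimensional d (fixed_space d \<rho> H)"
    and g: "g \<in> carrier G"
  defines "q \<equiv> q_elt G H (double_coset G H x)" and "e \<equiv> e_elt G d (character \<rho>)"
  shows "conv G q e g = char_ext G (character \<rho>) q * conv G (p_elt G H) e g"
  unfolding e_def conv_e_elt[OF g] rep_ext_q_elt[OF x one_dim, folded q_def]
  using rep_carrier[of "inv g"] g
  by (simp add: mult_smult_distrib[of _ d d _ d] trace_smult[of _ d])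

lemma q_elt_eigenrelation:
  assumes x: "x \<in> carrier G" and one_dim: "one_dimensional d (fixed_space d \<rho> H)"
    and v: "v \<in> fixed_space d \<rho> H" and j: "j < d" and r: "r \<in> carrier G"
  defines "D \<equiv> double_coset G H x" and "f \<equiv> \<lambda>s. (\<rho> s *\<^sub>v v) $ j"
  shows "char_ext G (character \<rho>) (q_elt G H D) * f r
    = (\<Sum>C\<in>lcosets_in (r <# D). f (SOME y. y \<in> C))"
proof -
  let ?c = "char_ext G (character \<rho>) (q_elt G H D)"
  have vc: "v \<in> carrier_vec d" and fix_v: "\<And>h. h \<in> H \<Longrightarrow> \<rho> h *\<^sub>v v = v"
    using v by (auto simp: fixed_space_def)
  have D: "D \<subseteq> carrier G" unfolding D_def by (rule double_coset_subset[OF x])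
  have rD: "r <# D \<subseteq> carrier G" using l_coset_subset_G[OF D r] .
  have stable: "y \<otimes> h \<in> r <# D" if y: "y \<in> r <# D" and h: "h \<in> H" for y h
  proof -
    obtain z where "z \<in> D" "y = r \<otimes> z" using y unfolding l_coset_def by blast
    moreover from this have "y \<otimes> h = r \<otimes> (z \<otimes> h)" using D r h by (auto simp: m_assoc H_carrier)
    ultimately show ?thesis
      using double_coset_mult_right[OF x _ h] unfolding D_def l_coset_def by blast
  qed
  have f_right_invariant: "f (s \<otimes> h) = f s" if "s \<in> carrier G" "h \<in> H" for s h
    using assoc_mult_mat_vec[OF rep_carrier[of s] rep_carrier[of h] vc] that H_carrier
    by (simp add: f_def rep_mult fix_v)
  have "rep_ext (q_elt G H D) *\<^sub>v v = ?c \<cdot>\<^sub>v v"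
    using rep_ext_q_elt[OF x one_dim] rep_ext_p_elt_fixed[OF v] vc
    by (simp add: D_def smult_mat_mult_mat_vec[OF rep_ext_carrier vc])
  then have "(\<rho> r * rep_ext (q_elt G H D)) *\<^sub>v v = ?c \<cdot>\<^sub>v (\<rho> r *\<^sub>v v)"
    using assoc_mult_mat_vec[OF rep_carrier[OF r] rep_ext_carrier vc] mult_mat_vec[OF rep_carrier[OF r] vc]
    by simp
  then have "?c * f r = ((\<rho> r * rep_ext (q_elt G H D)) *\<^sub>v v) $ j"
    using j rep_carrier[OF r] by (simp add: f_def)
  also have "\<dots> = (\<Sum>g\<in>carrier G. q_elt G H D (inv r \<otimes> g) * f g)"
    unfolding rep_mult_rep_ext[OF r] f_def by (rule rep_ext_mult_vec_index[OF vc j])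
  also have "\<dots> = (\<Sum>g\<in>carrier G. q_elt G H (r <# D) g * f g)"
    using mem_l_coset_iff[OF r _ D] r by (intro sum.cong refl) (simp add: q_elt_def)
  also have "\<dots> = (\<Sum>C\<in>lcosets_in (r <# D). \<Sum>h\<in>H. f ((SOME y. y \<in> C) \<otimes> h)) / of_nat (card H)"
    using sum_lcosets_in_rep[OF rD stable, of f] by (simp add: sum_q_elt[OF rD])
  also have "\<dots> = (\<Sum>C\<in>lcosets_in (r <# D). f (SOME y. y \<in> C))"
    using lcosets_in_rep(1)[OF rD] f_right_invariant card_H_pos
    by (simp add: sum_divide_distrib)
  finally show ?thesis .
qed

lemma algebraic_int_char_ext_q_elt:
  assumes x: "x \<in> carrier G" and one_dim: "one_dimensional d (fixed_space d \<rho> H)"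
  shows "algebraic_int (char_ext G (character \<rho>) (q_elt G H (double_coset G H x)))"
proof -
  define D where "D = double_coset G H x"
  define L where "L = lcosets_in (carrier G)"
  obtain v where proj: "line_projection d (rep_ext (p_elt G H)) v" and v: "v \<in> fixed_space d \<rho> H"
    using rep_ext_p_elt_line_projection[OF one_dim] by blast
  have "v \<in> carrier_vec d" and "v \<noteq> 0\<^sub>v d"
    using proj by (auto simp: line_projection_def)
  then obtain j where j: "j < d" "v $ j \<noteq> 0"
    using nonzero_vec_index by blast
  define f where "f s = (\<rho> s *\<^sub>v v) $ j" for s
  have finite_L: "finite L"
    unfolding L_def lcosets_in_def using finite_carrier by (simp add: finite_image_set)
  have L_rep: "(SOME y. y \<in> C) \<in> carrier G" if "C \<in> L" for C
    using lcosets_in_rep(1)[OF _ that[unfolded L_def]] by simp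
  show ?thesis
  proof (rule algebraic_int_eigenvalue_of_int_kernel[where L=L and z=H
        and t="\<lambda>C. f (SOME y. y \<in> C)" and A="\<lambda>C C'. of_bool (C' \<in> lcosets_in ((SOME y. y \<in> C) <# D))"])
    show "finite L" by (rule finite_L)
    show "H \<in> L" unfolding L_def lcosets_in_def using lcos_mult_one[OF H_subset] by force
    have "(SOME y. y \<in> H) \<in> H" using subgroup.one_closed[OF subgroup_H] by (rule someI)
    then show "f (SOME y. y \<in> H) \<noteq> 0"
      using v j by (simp add: f_def fixed_space_def)
  next
    fix C assume C: "C \<in> L"
    let ?r = "SOME y. y \<in> C"
    have "lcosets_in (?r <# D) \<subseteq> L"
      using l_coset_subset_G[OF double_coset_subset[OF x] L_rep[OF C]]
      unfolding L_def lcosets_in_def D_def by blast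
    then have "(\<Sum>C'\<in>L. of_int (of_bool (C' \<in> lcosets_in (?r <# D))) * f (SOME y. y \<in> C'))
        = (\<Sum>C'\<in>lcosets_in (?r <# D). f (SOME y. y \<in> C'))"
      using finite_L by (simp add: sum.inter_restrict[symmetric] Int_absorb1)
    also have "\<dots> = char_ext G (character \<rho>) (q_elt G H D) * f ?r"
      unfolding D_def f_def by (rule q_elt_eigenrelation[OF x one_dim v j(1) L_rep[OF C], symmetric])
    finally show "char_ext G (character \<rho>) (q_elt G H (double_coset G H x)) * f ?r
        = (\<Sum>C'\<in>L. of_int (of_bool (C' \<in> lcosets_in (?r <# D))) * f (SOME y. y \<in> C'))"
      unfolding D_def by simp
  qed
qed

lemma char_ext_q_elt_Ints:
  assumes x: "x \<in> carrier G" and one_dim: "one_dimensional d (fixed_space d \<rho> H)"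
    and rational: "\<forall>g\<in>carrier G. character \<rho> g \<in> \<rat>"
  shows "char_ext G (character \<rho>) (q_elt G H (double_coset G H x)) \<in> \<int>"
proof -
  have "char_ext G (character \<rho>) (q_elt G H (double_coset G H x)) \<in> \<rat>"
    unfolding char_ext_def q_elt_def using rational by (auto intro!: Rats_sum Rats_mult)
  with algebraic_int_char_ext_q_elt[OF x one_dim] show ?thesis
    by (rule rational_algebraic_int_is_int)
qed

lemma q_act_eq_zmul_on_image:
  fixes n :: nat
  assumes act: "additive_action G act" and x: "x \<in> carrier G"
    and one_dim: "one_dimensional d (fixed_space d \<rho> H)"
    and k: "char_ext G (character \<rho>) (q_elt G H (double_coset G H x)) = of_int k"
  defines "\<beta> \<equiv> \<lambda>g. of_nat n * conv G (p_elt G H) (e_elt G d (character \<rho>)) g"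
  assumes integral: "integral_elt G \<beta>"
  shows "q_act G act H (double_coset G H x) (int_act G act \<beta> a) = zmul k (int_act G act \<beta> a)"
proof -
  have "\<forall>g\<in>carrier G. \<exists>l. \<beta> g = of_int l"
    using integral unfolding integral_elt_def by (blast elim: Ints_cases)
  then obtain l where l: "\<forall>g\<in>carrier G. \<beta> g = of_int (l g)"
    by (rule bchoice[THEN exE])
  have "(\<Sum>C\<in>lcosets_in (double_coset G H x). \<beta> (inv (SOME y. y \<in> C) \<otimes> g)) = of_int k * \<beta> g"
    if g: "g \<in> carrier G" for g
  proof -
    have "(\<Sum>C\<in>lcosets_in (double_coset G H x). \<beta> (inv (SOME y. y \<in> C) \<otimes> g))
        = of_nat n * conv G (q_elt G H (double_coset G H x)) (e_elt G d (character \<rho>)) g"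
      by (simp add: \<beta>_def sum_lcosets_conv_p_elt[OF x g] flip: sum_distrib_left)
    also have "\<dots> = of_int k * \<beta> g"
      by (simp add: \<beta>_def conv_q_elt_e_elt[OF x one_dim g] k)
    finally show ?thesis .
  qed
  then have "int_act G act (\<lambda>g. \<Sum>C\<in>lcosets_in (double_coset G H x). \<beta> (inv (SOME y. y \<in> C) \<otimes> g)) a
      = int_act G act (\<lambda>g. of_int k * \<beta> g) a"
    by (rule int_act_cong)
  then show ?thesis
    using q_act_int_act[OF act double_coset_subset[OF x] l[rule_format]]
      int_act_scale[OF l[rule_format]]
    by simp
qed

end

theorem lemma4p4:
  fixes G :: "('g, 'b) monoid_scheme"
    and act :: "'g \<Rightarrow> 'a::ab_group_add \<Rightarrow> 'a"
    and H :: "'g set"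
    and d :: nat
    and \<rho> :: "'g \<Rightarrow> complex mat"
  assumes "group G" and "finite (carrier G)"
    and "additive_action G act"
    and "subgroup H G"
    and "irreducible_rep G d \<rho>"
    and "one_dimensional d (fixed_space d \<rho> H)"
    and "\<forall>g\<in>carrier G. character \<rho> g \<in> \<rat>"
  shows "\<forall>x\<in>carrier G.
           \<exists>k::int. char_ext G (character \<rho>) (q_elt G H (double_coset G H x)) = of_int k \<and>
             (\<forall>n::nat. n > 0 \<and>
                integral_elt G (\<lambda>g. of_nat n * conv G (p_elt G H) (e_elt G d (character \<rho>)) g) \<longrightarrow>
                (\<forall>a. let z = int_act G act (\<lambda>g. of_nat n * conv G (p_elt G H) (e_elt G d (character \<rho>)) g) a
                     in q_act G act H (double_coset G H x) z = zmul k z))"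
proof -
  interpret hecke_rep G H d \<rho>
    using assms(1,2,4,5)
    by (simp add: hecke_rep_def hecke_rep_axioms_def hecke_pair_def hecke_pair_axioms_def
        irreducible_rep_def)
  show ?thesis (is "\<forall>x\<in>carrier G. \<exists>k. ?P x k")
  proof
    fix x assume x: "x \<in> carrier G"
    obtain k where k: "char_ext G (character \<rho>) (q_elt G H (double_coset G H x)) = of_int k"
      using char_ext_q_elt_Ints[OF x assms(6,7)] by (blast elim: Ints_cases)
    with q_act_eq_zmul_on_image[OF assms(3) x assms(6) k] show "\<exists>k. ?P x k"
      by (auto simp: Let_def)
  qed
qed

end
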